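(* Let $A$ be a uniform algebra and let $\theta : A \to M_n(\mathbb{C})$ be a continuous unital homomorphism. If $\|\theta\| > 1$, then for every continuous linear functional $\beta$ on $A$, $$\|\theta + \beta I\| \ge \|\theta\|,$$ where $\theta+\beta I : A\to M_n(\mathbb{C})$ denotes the linear map $f \mapsto \theta(f)+\beta(f)I$.
   Context: A uniform algebra is a norm-closed subalgebra of $C(X)$, for $X$ a compact Hausdorff space, containing the constants, with the supremum norm. $M_n(\mathbb{C})$ carries the operator norm, and norms of maps are operator norms. *)

theory Defs
  imports "HOL-Analysis.Analysis"
begin

text \<open>The compact Hausdorff space X is modelled as a type 'x with t2_space and compact UNIV;
  elements of C(X) are functions 'x => complex that are continuous.\<close>

definition sup_norm :: "('x \<Rightarrow> complex) \<Rightarrow> real" where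
  "sup_norm f = (SUP x. cmod (f x))"

definition uniform_algebra :: "('x::topological_space \<Rightarrow> complex) set \<Rightarrow> bool" where
  "uniform_algebra A \<longleftrightarrow>
     (\<forall>f\<in>A. continuous_on UNIV f) \<and>
     (\<forall>c. (\<lambda>x. c) \<in> A) \<and>
     (\<forall>f\<in>A. \<forall>g\<in>A. (\<lambda>x. f x + g x) \<in> A \<and> (\<lambda>x. f x * g x) \<in> A) \<and>
     (\<forall>c. \<forall>f\<in>A. (\<lambda>x. c * f x) \<in> A) \<and>
     (\<forall>F g. (\<forall>k. F k \<in> A) \<and> uniform_limit UNIV F g sequentially \<longrightarrow> g \<in> A)"

definition cmat_scale :: "complex \<Rightarrow> complex^'n^'m \<Rightarrow> complex^'n^'m" where
  "cmat_scale c M = (\<chi> i j. c * M $ i $ j)"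

definition mat_opnorm :: "complex^'n^'n \<Rightarrow> real" where
  "mat_opnorm M = onorm (\<lambda>v::complex^'n. M *v v)"

definition map_norm :: "('x \<Rightarrow> complex) set \<Rightarrow> (('x \<Rightarrow> complex) \<Rightarrow> complex^'n^'n) \<Rightarrow> real" where
  "map_norm A \<Phi> = (SUP f \<in> {f \<in> A. sup_norm f \<le> 1}. mat_opnorm (\<Phi> f))"

definition cont_unital_hom ::
  "('x \<Rightarrow> complex) set \<Rightarrow> (('x \<Rightarrow> complex) \<Rightarrow> complex^'n^'n) \<Rightarrow> bool" where
  "cont_unital_hom A \<theta> \<longleftrightarrow>
     (\<forall>f\<in>A. \<forall>g\<in>A. \<theta> (\<lambda>x. f x + g x) = \<theta> f + \<theta> g) \<and>
     (\<forall>c. \<forall>f\<in>A. \<theta> (\<lambda>x. c * f x) = cmat_scale c (\<theta> f)) \<and>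
     (\<forall>f\<in>A. \<forall>g\<in>A. \<theta> (\<lambda>x. f x * g x) = \<theta> f ** \<theta> g) \<and>
     \<theta> (\<lambda>x. 1) = mat 1 \<and>
     (\<exists>C. \<forall>f\<in>A. mat_opnorm (\<theta> f) \<le> C * sup_norm f)"

definition cont_lin_functional :: "('x \<Rightarrow> complex) set \<Rightarrow> (('x \<Rightarrow> complex) \<Rightarrow> complex) \<Rightarrow> bool" where
  "cont_lin_functional A \<beta> \<longleftrightarrow>
     (\<forall>f\<in>A. \<forall>g\<in>A. \<beta> (\<lambda>x. f x + g x) = \<beta> f + \<beta> g) \<and>
     (\<forall>c. \<forall>f\<in>A. \<beta> (\<lambda>x. c * f x) = c * \<beta> f) \<and>
     (\<exists>C. \<forall>f\<in>A. cmod (\<beta> f) \<le> C * sup_norm f)"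

end

theory Submission
  imports Defs
begin

(*
  Let K be the closure of the image under theta of the unit ball of A. It is a compact set of
  matrices, so |Y z| attains its maximum m over Y in K and unit vectors z at some pair (X, u);
  then m >= ||theta|| > 1. Put y = X u. Since |Y z| <= m |z| on K, the first variation of
  |X (u + s v)| at s = 0 gives <X u, X v> = m^2 <u, v>. The set K is also invariant under the
  matrix versions of the polynomials (z - w + conj w z^2) / (1 + 2 |w|^2), which map the closed
  disc into itself for |w| <= 1/2, and the first variation in w of the resulting bound gives
  <y, u> = <X y, y> = m^2 <y, u>. As m <> 1, u is orthogonal to y, so the scalar part of
  theta + beta I does not contribute to <(theta f + beta f I) u, y>, and in the limit X we get
  m^2 = |<X u, y>| <= ||theta + beta I|| m.
*)

definition cinner :: "complex^'n \<Rightarrow> complex^'n \<Rightarrow> complex" where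
  "cinner x y = (\<Sum>i\<in>UNIV. x $ i * cnj (y $ i))"

lemma cinner_add_left: "cinner (x + y) z = cinner x z + cinner y z"
  by (simp add: cinner_def distrib_right sum.distrib)

lemma cinner_add_right: "cinner x (y + z) = cinner x y + cinner x z"
  by (simp add: cinner_def distrib_left sum.distrib)

lemma cinner_scale_left: "cinner (c *s x) y = c * cinner x y"
  by (simp add: cinner_def sum_distrib_left mult.assoc)

lemma cinner_scale_right: "cinner x (c *s y) = cnj c * cinner x y"
  by (simp add: cinner_def sum_distrib_left mult.left_commute)

lemma cinner_zero_left [simp]: "cinner 0 y = 0"
  by (simp add: cinner_def)

lemma cinner_minus_right: "cinner x (- y) = - cinner x y"
  by (simp add: cinner_def sum_negf)

lemma cnj_cinner: "cnj (cinner x y) = cinner y x"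
  by (simp add: cinner_def mult.commute)

lemma cinner_self: "cinner x x = of_real ((norm x)^2)"
proof -
  have "(norm x)^2 = (\<Sum>i\<in>UNIV. (cmod (x $ i))^2)"
    by (simp add: norm_vec_def L2_set_def sum_nonneg)
  moreover have "(complex_of_real (cmod z))^2 = z * cnj z" for z
    by (metis complex_norm_square of_real_power)
  ultimately show ?thesis
    by (simp add: cinner_def)
qed

lemma norm_vector_smult: "norm (c *s x) = norm c * norm (x::'a::real_normed_div_algebra^'n)"
  by (simp add: norm_vec_def L2_set_right_distrib norm_mult)

lemma norm_cinner_le: "cmod (cinner x y) \<le> norm x * norm y"
proof -
  have "cmod (cinner x y) \<le> (\<Sum>i\<in>UNIV. \<bar>cmod (x $ i)\<bar> * \<bar>cmod (y $ i)\<bar>)"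
    unfolding cinner_def by (rule order_trans[OF norm_sum]) (simp add: norm_mult)
  also have "\<dots> \<le> norm x * norm y"
    unfolding norm_vec_def by (rule L2_set_mult_ineq)
  finally show ?thesis .
qed

lemma norm_add_squared_cinner:
  "(norm (x + y))^2 = (norm x)^2 + 2 * Re (cinner x y) + (norm (y::complex^'n))^2"
proof -
  have "complex_of_real ((norm (x + y))^2) = cinner x x + (cinner x y + cnj (cinner x y)) + cinner y y"
    by (simp only: cinner_self[symmetric] cinner_add_left cinner_add_right cnj_cinner add_ac)
  also have "\<dots> = complex_of_real ((norm x)^2 + 2 * Re (cinner x y) + (norm y)^2)"
    by (simp add: cinner_self complex_add_cnj)
  finally show ?thesis
    using of_real_eq_iff by blast
qed

lemma continuous_on_cinner [continuous_intros]:
  "continuous_on S f \<Longrightarrow> continuous_on S g \<Longrightarrow> continuous_on S (\<lambda>t. cinner (f t) (g t))"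
  unfolding cinner_def by (intro continuous_intros)

lemma norm_axis_complex: "norm (axis i (1::complex)) = 1"
proof -
  have "axis i (1::complex) \<in> Basis"
    by (auto simp: Basis_vec_def)
  then show ?thesis
    by (rule norm_Basis)
qed

lemma continuous_on_matrix_vector_mult [continuous_intros]:
  fixes f :: "'a::topological_space \<Rightarrow> 'b::real_normed_algebra_1^'n^'m"
  shows "continuous_on S f \<Longrightarrow> continuous_on S g \<Longrightarrow> continuous_on S (\<lambda>t. f t *v g t)"
  unfolding matrix_vector_mult_def by (intro continuous_intros)

lemma continuous_on_matrix_matrix_mult [continuous_intros]:
  fixes f :: "'a::topological_space \<Rightarrow> 'b::real_normed_algebra_1^'n^'m"
  shows "continuous_on S f \<Longrightarrow> continuous_on S g \<Longrightarrow> continuous_on S (\<lambda>t. f t ** g t)"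
  unfolding matrix_matrix_mult_def by (intro continuous_intros)

lemma cmat_scale_mult_vec: "cmat_scale c M *v v = c *s (M *v v)"
  by (simp add: vec_eq_iff matrix_vector_mult_def cmat_scale_def sum_distrib_left mult_ac)

lemma continuous_on_cmat_scale [continuous_intros]:
  "continuous_on S f \<Longrightarrow> continuous_on S (\<lambda>t. cmat_scale c (f t))"
  unfolding cmat_scale_def by (intro continuous_intros)

lemma norm_mult_le_mat_opnorm: "norm (M *v v) \<le> mat_opnorm M * norm v"
  unfolding mat_opnorm_def by (rule onorm) simp

lemma mat_opnorm_le: "(\<And>v. norm (M *v v) \<le> c * norm v) \<Longrightarrow> mat_opnorm M \<le> c"
  unfolding mat_opnorm_def by (rule onorm_le)

lemma mat_opnorm_nonneg: "mat_opnorm M \<ge> 0"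
  unfolding mat_opnorm_def by (rule onorm_pos_le) simp

lemma mat_opnorm_add_scalar_le: "mat_opnorm (M + cmat_scale c (mat 1)) \<le> mat_opnorm M + cmod c"
proof (rule mat_opnorm_le)
  fix v
  have "norm ((M + cmat_scale c (mat 1)) *v v) \<le> norm (M *v v) + norm (c *s v)"
    by (simp add: matrix_vector_mult_add_rdistrib cmat_scale_mult_vec norm_triangle_ineq)
  also have "\<dots> \<le> (mat_opnorm M + cmod c) * norm v"
    using norm_mult_le_mat_opnorm[of M v] by (simp add: norm_vector_smult algebra_simps)
  finally show "norm ((M + cmat_scale c (mat 1)) *v v) \<le> (mat_opnorm M + cmod c) * norm v" .
qed

lemma norm_le_mat_opnorm: "norm M \<le> CARD('n) * (CARD('n) * mat_opnorm (M::complex^'n^'n))"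
proof -
  have norm_le_sum: "norm x \<le> (\<Sum>i\<in>UNIV. norm (x $ i))" for x :: "'a::real_normed_vector^'n"
    unfolding norm_vec_def by (rule L2_set_le_sum) simp
  have entry: "cmod (M $ i $ j) \<le> mat_opnorm M" for i j
  proof -
    have "M $ i $ j = (M *v axis j 1) $ i"
      by (simp add: matrix_vector_mult_def axis_def if_distrib[of "\<lambda>x. _ * x"] cong: if_cong)
    then have "cmod (M $ i $ j) \<le> norm (M *v axis j 1)"
      by (metis Finite_Cartesian_Product.norm_nth_le)
    also have "\<dots> \<le> mat_opnorm M"
      using norm_mult_le_mat_opnorm[of M "axis j 1"] by (simp add: norm_axis_complex)
    finally show ?thesis .
  qed
  have "norm M \<le> (\<Sum>i\<in>UNIV. \<Sum>j\<in>UNIV. cmod (M $ i $ j))"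
    by (rule order_trans[OF norm_le_sum]) (intro sum_mono norm_le_sum)
  also have "\<dots> \<le> (\<Sum>i\<in>(UNIV::'n set). \<Sum>j\<in>(UNIV::'n set). mat_opnorm M)"
    by (intro sum_mono entry)
  finally show ?thesis
    by simp
qed

lemma compact_matrices_maximizing_vector:
  fixes K :: "(complex^'n^'n) set"
  assumes "compact K" "K \<noteq> {}"
  obtains X u where "X \<in> K" "norm u = 1"
    "\<And>Y z. Y \<in> K \<Longrightarrow> norm (Y *v z) \<le> norm (X *v u) * norm z"
proof -
  let ?T = "K \<times> sphere (0::complex^'n) 1"
  have "compact ?T"
    using assms by (intro compact_Times compact_sphere)
  moreover have "?T \<noteq> {}"
    using assms norm_axis_complex by fastforce
  moreover have "continuous_on ?T (\<lambda>p. norm (fst p *v snd p))"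
    by (intro continuous_intros)
  ultimately obtain p where p: "p \<in> ?T"
    and max: "\<And>q. q \<in> ?T \<Longrightarrow> norm (fst q *v snd q) \<le> norm (fst p *v snd p)"
    using continuous_attains_sup[of ?T "\<lambda>p. norm (fst p *v snd p)"] by blast
  obtain X u where p_eq: "p = (X, u)"
    by (cases p)
  have bound: "norm (Y *v z) \<le> norm (X *v u) * norm z" if "Y \<in> K" for Y z
  proof (cases "z = 0")
    case False
    define c where "c = complex_of_real (1 / norm z)"
    have "(Y, c *s z) \<in> ?T"
      using that False by (simp add: c_def norm_vector_smult norm_divide)
    from max[OF this] have "norm (c *s (Y *v z)) \<le> norm (X *v u)"
      by (simp add: p_eq vector_scalar_commute)
    then have "norm (Y *v z) / norm z \<le> norm (X *v u)"
      by (simp add: c_def norm_vector_smult norm_divide)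
    then show ?thesis
      using False by (simp add: divide_le_eq)
  qed simp
  show thesis
    using p by (intro that[of X u] bound) (simp_all add: p_eq)
qed

lemma eq_0_if_Re_cnj_mult_le_quadratic:
  assumes "r > 0" and le: "\<And>w. cmod w \<le> r \<Longrightarrow> Re (cnj w * \<alpha>) \<le> C * (cmod w)^2"
  shows "\<alpha> = 0"
proof (rule ccontr)
  assume "\<alpha> \<noteq> 0"
  define t where "t = r / (cmod \<alpha> + 2 * \<bar>C\<bar> * r)"
  have t_pos: "t > 0"
    using \<open>r > 0\<close> \<open>\<alpha> \<noteq> 0\<close> by (simp add: t_def add_pos_nonneg)
  have denom_pos: "cmod \<alpha> + 2 * \<bar>C\<bar> * r > 0"
    using \<open>r > 0\<close> \<open>\<alpha> \<noteq> 0\<close> by (simp add: add_pos_nonneg)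
  have norm_t\<alpha>: "cmod (of_real t * \<alpha>) = t * cmod \<alpha>"
    using t_pos by (simp add: norm_mult)
  also have "\<dots> \<le> r"
    using \<open>r > 0\<close> denom_pos by (simp add: t_def divide_le_eq)
  finally have "Re (cnj (of_real t * \<alpha>) * \<alpha>) \<le> C * (cmod (of_real t * \<alpha>))^2"
    by (rule le)
  moreover have "Re (cnj (of_real t * \<alpha>) * \<alpha>) = t * (cmod \<alpha>)^2"
    by (simp only: cmod_power2) (simp add: power2_eq_square algebra_simps)
  ultimately have "t * (cmod \<alpha>)^2 * 1 \<le> t * (cmod \<alpha>)^2 * (C * t)"
    unfolding norm_t\<alpha> by (simp add: power2_eq_square mult_ac)
  then have "1 \<le> C * t"
    using t_pos \<open>\<alpha> \<noteq> 0\<close> by (simp add: mult_le_cancel_left_pos)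
  moreover have "\<bar>C\<bar> * t \<le> 1/2"
    using denom_pos by (simp add: t_def divide_le_eq)
  ultimately show False
    using mult_right_mono[OF abs_ge_self[of C], of t] t_pos by linarith
qed

lemma cinner_first_variation:
  fixes a b c :: "complex^'n"
  assumes "r > 0"
    and le: "\<And>w. cmod w \<le> r \<Longrightarrow>
      (norm (a + (w *s b + cnj w *s c)))^2 \<le> (norm a)^2 + 2 * Re (cnj w * \<gamma>) + C * (cmod w)^2"
  shows "cinner a b + cinner c a = \<gamma>"
proof -
  have "Re (cnj w * (cinner a b + cinner c a - \<gamma>)) \<le> C / 2 * (cmod w)^2" if "cmod w \<le> r" for w
  proof -
    define d where "d = w *s b + cnj w *s c"
    have "Re (cinner a d) = Re (cnj w * (cinner a b + cinner c a))"
      by (simp add: d_def cinner_add_right cinner_scale_right distrib_left cnj_cinner[of a c, symmetric])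
    then have "Re (cnj w * (cinner a b + cinner c a - \<gamma>)) = Re (cinner a d) - Re (cnj w * \<gamma>)"
      by (simp only: right_diff_distrib minus_complex.sel)
    moreover have "(norm (a + d))^2 = (norm a)^2 + 2 * Re (cinner a d) + (norm d)^2"
      by (rule norm_add_squared_cinner)
    ultimately show ?thesis
      using le[OF that, folded d_def] zero_le_power2[of "norm d"] by linarith
  qed
  then have "cinner a b + cinner c a - \<gamma> = 0"
    by (rule eq_0_if_Re_cnj_mult_le_quadratic[OF \<open>r > 0\<close>])
  then show ?thesis
    by simp
qed

lemma cinner_maximizing_vector:
  fixes X :: "complex^'n^'n"
  assumes le: "\<And>z. norm (X *v z) \<le> m * norm z" and eq: "norm (X *v u) = m * norm u"
  shows "cinner (X *v u) (X *v v) = m^2 * cinner u v"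
proof -
  have "(norm (X *v u + (w *s (X *v v) + cnj w *s 0)))^2
      \<le> (norm (X *v u))^2 + 2 * Re (cnj w * (m^2 * cinner u v)) + m^2 * (norm v)^2 * (cmod w)^2" for w
  proof -
    have "X *v u + (w *s (X *v v) + cnj w *s 0) = X *v (u + w *s v)"
      by (simp add: matrix_vector_right_distrib vector_scalar_commute)
    moreover have "(norm (X *v (u + w *s v)))^2 \<le> m^2 * (norm (u + w *s v))^2"
      using le[of "u + w *s v"] by (metis norm_ge_zero power_mono power_mult_distrib)
    moreover have "(norm (u + w *s v))^2 = (norm u)^2 + 2 * Re (cnj w * cinner u v) + (cmod w)^2 * (norm v)^2"
      by (simp add: norm_add_squared_cinner cinner_scale_right norm_vector_smult power_mult_distrib)
    moreover have "Re (cnj w * (m^2 * cinner u v)) = m^2 * Re (cnj w * cinner u v)"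
      by (simp add: mult.left_commute[of "cnj w"])
    ultimately show ?thesis
      using eq by (simp add: power_mult_distrib algebra_simps)
  qed
  then have "cinner (X *v u) (X *v v) + cinner 0 (X *v u) = m^2 * cinner u v"
    by (intro cinner_first_variation[of 1]) auto
  then show ?thesis
    by simp
qed

lemma maximizing_vector_orthogonal:
  fixes X :: "complex^'n^'n"
  assumes le: "\<And>z. norm (X *v z) \<le> m * norm z"
    and "norm u = 1" "norm (X *v u) = m" "m \<noteq> 1"
    and perturbed: "\<And>w. cmod w \<le> 1/2 \<Longrightarrow>
      norm (X *v u - w *s u + cnj w *s (X *v (X *v u))) \<le> m * (1 + 2 * (cmod w)^2)"
  shows "cinner (X *v u) u = 0"
proof -
  define y where "y = X *v u"
  have "norm y = m"
    using assms by (simp add: y_def)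
  have perturbed_sq: "(norm (y + (w *s (- u) + cnj w *s (X *v y))))^2
      \<le> (norm y)^2 + 2 * Re (cnj w * 0) + 5 * m^2 * (cmod w)^2" if w: "cmod w \<le> 1/2" for w
  proof -
    have "y + (w *s (- u) + cnj w *s (X *v y)) = X *v u - w *s u + cnj w *s (X *v (X *v u))"
      by (simp add: y_def vector_smult_rneg)
    then have "(norm (y + (w *s (- u) + cnj w *s (X *v y))))^2 \<le> (m * (1 + 2 * (cmod w)^2))^2"
      using perturbed[OF w] by (metis norm_ge_zero power_mono)
    moreover have "4 * (cmod w)^2 \<le> 1"
      using power_mono[OF w, of 2] by (simp add: power2_eq_square)
    then have "m^2 * (cmod w)^2 * (4 * (cmod w)^2) \<le> m^2 * (cmod w)^2 * 1"
      by (rule mult_left_mono) simp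
    then have "(m * (1 + 2 * (cmod w)^2))^2 \<le> m^2 + 5 * m^2 * (cmod w)^2"
      by (simp add: power2_eq_square algebra_simps)
    ultimately show ?thesis
      using \<open>norm y = m\<close> by simp
  qed
  have "cinner y (- u) + cinner (X *v y) y = 0"
    by (rule cinner_first_variation[of "1/2", OF _ perturbed_sq]) simp_all
  then have "cinner y u = cnj (cinner y (X *v y))"
    by (simp add: cinner_minus_right cnj_cinner)
  also have "\<dots> = m^2 * cinner y u"
    unfolding y_def using cinner_maximizing_vector[OF le] assms by (simp add: cnj_cinner)
  finally have eq: "cinner y u = m^2 * cinner y u" .
  then have "(1 - complex_of_real (m^2)) * cinner y u = 0"
    by (simp only: left_diff_distrib mult_1 eq[symmetric] diff_self)
  moreover have "m^2 \<noteq> 1"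
    using \<open>m \<noteq> 1\<close> norm_ge_zero[of y] \<open>norm y = m\<close> by (simp add: power2_eq_1_iff)
  ultimately show ?thesis
    unfolding y_def by (metis mult_eq_0_iff of_real_1 of_real_diff of_real_eq_0_iff of_real_power right_minus_eq)
qed

(* z - w + conj w z^2 is the first-order part in w of the disc automorphism (z - w) / (1 - conj w z). *)
lemma norm_disc_perturbation_le:
  fixes z w :: complex
  assumes z: "cmod z \<le> 1" and w: "cmod w \<le> 1/2"
  shows "cmod (z - w + cnj w * z^2) \<le> 1 + 2 * (cmod w)^2"
proof -
  define h where "h = cnj w * z^2 - w"
  have "Re (cnj z * h) = ((cmod z)^2 - 1) * Re (cnj w * z)"
    by (simp only: cmod_power2) (simp add: h_def power2_eq_square algebra_simps)
  also have "\<dots> = (1 - (cmod z)^2) * (- Re (cnj w * z))"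
    by (simp add: algebra_simps)
  also have "\<dots> \<le> (1 - (cmod z)^2) * cmod w"
  proof (rule mult_left_mono)
    have "\<bar>Re (cnj w * z)\<bar> \<le> cmod w * cmod z"
      using abs_Re_le_cmod[of "cnj w * z"] by (simp add: norm_mult)
    also have "\<dots> \<le> cmod w"
      using z by (simp add: mult_left_le)
    finally show "- Re (cnj w * z) \<le> cmod w"
      by linarith
    show "0 \<le> 1 - (cmod z)^2"
      using z by (simp add: power_le_one)
  qed
  finally have re: "Re (cnj z * h) \<le> (1 - (cmod z)^2) * cmod w" .
  have "cmod h \<le> cmod w * (cmod z)^2 + cmod w"
    unfolding h_def using norm_triangle_ineq4[of "cnj w * z^2" w] by (simp add: norm_mult norm_power)
  also have "\<dots> \<le> 2 * cmod w"
    using z by (simp add: mult_left_le power_le_one)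
  finally have "(cmod h)^2 \<le> 4 * (cmod w)^2"
    using power_mono[of "cmod h" "2 * cmod w" 2] by (simp add: power_mult_distrib)
  moreover have "(cmod (z + h))^2 = (cmod z)^2 + 2 * Re (cnj z * h) + (cmod h)^2"
    by (simp only: cmod_power2) (simp add: power2_eq_square algebra_simps)
  moreover have "(1 - (cmod z)^2) * (2 * cmod w) \<le> (1 - (cmod z)^2) * 1"
    using w z by (intro mult_left_mono) (simp_all add: power_le_one)
  then have "2 * ((1 - (cmod z)^2) * cmod w) \<le> 1 - (cmod z)^2"
    by (simp add: mult_ac)
  ultimately have "(cmod (z + h))^2 \<le> 1 + 4 * (cmod w)^2"
    using re by linarith
  also have "\<dots> \<le> 1 + 4 * (cmod w)^2 + 4 * ((cmod w)^2)^2"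
    by simp
  also have "\<dots> = (1 + 2 * (cmod w)^2)^2"
    by (simp add: power2_eq_square algebra_simps)
  finally have "(cmod (z + h))^2 \<le> (1 + 2 * (cmod w)^2)^2" .
  then have "cmod (z + h) \<le> 1 + 2 * (cmod w)^2"
    by (rule power2_le_imp_le) simp
  then show ?thesis
    by (simp add: h_def algebra_simps)
qed

lemma norm_le_sup_norm:
  fixes f :: "'x::topological_space \<Rightarrow> complex"
  assumes "compact (UNIV::'x set)" "continuous_on UNIV f"
  shows "cmod (f x) \<le> sup_norm f"
proof -
  have "bdd_above (range (\<lambda>x. cmod (f x)))"
    by (intro bounded_imp_bdd_above compact_imp_bounded compact_continuous_image continuous_intros assms)
  then show ?thesis
    unfolding sup_norm_def by (rule cSUP_upper[OF UNIV_I])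
qed

lemma sup_norm_le: "(\<And>x. cmod (f x) \<le> b) \<Longrightarrow> sup_norm f \<le> b"
  unfolding sup_norm_def by (rule cSUP_least) auto

definition unit_ball :: "('x \<Rightarrow> complex) set \<Rightarrow> ('x \<Rightarrow> complex) set" where
  "unit_ball A = {f \<in> A. sup_norm f \<le> 1}"

lemma map_norm_unit_ball: "map_norm A \<Phi> = (SUP f \<in> unit_ball A. mat_opnorm (\<Phi> f))"
  by (simp add: map_norm_def unit_ball_def)

lemma mat_opnorm_le_map_norm:
  assumes "\<And>f. f \<in> unit_ball A \<Longrightarrow> mat_opnorm (\<Phi> f) \<le> D" and "f \<in> unit_ball A"
  shows "mat_opnorm (\<Phi> f) \<le> map_norm A \<Phi>"
  unfolding map_norm_unit_ball using assms by (intro cSUP_upper bdd_aboveI2)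

lemma map_norm_le:
  assumes "unit_ball A \<noteq> {}" and "\<And>f. f \<in> unit_ball A \<Longrightarrow> mat_opnorm (\<Phi> f) \<le> c"
  shows "map_norm A \<Phi> \<le> c"
  unfolding map_norm_unit_ball using assms by (rule cSUP_least)

locale compact_uniform_algebra =
  fixes A :: "('x::topological_space \<Rightarrow> complex) set"
  assumes compact_domain: "compact (UNIV :: 'x set)"
    and uniform_algebra: "uniform_algebra A"
begin

lemma continuous_on_mem: "f \<in> A \<Longrightarrow> continuous_on UNIV f"
  and const_mem: "(\<lambda>x. c) \<in> A"
  and add_mem: "f \<in> A \<Longrightarrow> g \<in> A \<Longrightarrow> (\<lambda>x. f x + g x) \<in> A"
  and mult_mem: "f \<in> A \<Longrightarrow> g \<in> A \<Longrightarrow> (\<lambda>x. f x * g x) \<in> A"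
  and scale_mem: "f \<in> A \<Longrightarrow> (\<lambda>x. c * f x) \<in> A"
  using uniform_algebra unfolding uniform_algebra_def by blast+

lemma sup_norm_unit_ball:
  assumes "f \<in> unit_ball A"
  shows "0 \<le> sup_norm f" and "sup_norm f \<le> 1" and "cmod (f x) \<le> 1"
proof -
  from assms have "f \<in> A" and le_1: "sup_norm f \<le> 1"
    by (simp_all add: unit_ball_def)
  then have le: "cmod (f y) \<le> sup_norm f" for y
    by (intro norm_le_sup_norm compact_domain continuous_on_mem)
  show "0 \<le> sup_norm f"
    using le[of x] norm_ge_zero order_trans by blast
  show "sup_norm f \<le> 1"
    by (fact le_1)
  show "cmod (f x) \<le> 1"
    using le le_1 by (rule order_trans)
qed

lemma const_1_mem_unit_ball: "(\<lambda>x. 1) \<in> unit_ball A"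
  unfolding unit_ball_def using const_mem by (auto intro: sup_norm_le)

lemma le_abs_on_unit_ball:
  fixes N :: "('x \<Rightarrow> complex) \<Rightarrow> real"
  assumes "\<And>f. f \<in> A \<Longrightarrow> N f \<le> C * sup_norm f" and "f \<in> unit_ball A"
  shows "N f \<le> \<bar>C\<bar>"
proof -
  have "N f \<le> C * sup_norm f"
    using assms by (simp add: unit_ball_def)
  also have "\<dots> \<le> \<bar>C\<bar> * sup_norm f"
    using sup_norm_unit_ball(1)[OF assms(2)] by (intro mult_right_mono) simp_all
  also have "\<dots> \<le> \<bar>C\<bar>"
    using sup_norm_unit_ball(2)[OF assms(2)] by (intro mult_left_le) simp_all
  finally show ?thesis .
qed

end

locale unital_representation = compact_uniform_algebra A
  for A :: "('x::topological_space \<Rightarrow> complex) set" +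
  fixes \<theta> :: "('x \<Rightarrow> complex) \<Rightarrow> complex^'n::finite^'n"
  assumes hom: "cont_unital_hom A \<theta>"
begin

lemma hom_add: "f \<in> A \<Longrightarrow> g \<in> A \<Longrightarrow> \<theta> (\<lambda>x. f x + g x) = \<theta> f + \<theta> g"
  and hom_scale: "f \<in> A \<Longrightarrow> \<theta> (\<lambda>x. c * f x) = cmat_scale c (\<theta> f)"
  and hom_mult: "f \<in> A \<Longrightarrow> g \<in> A \<Longrightarrow> \<theta> (\<lambda>x. f x * g x) = \<theta> f ** \<theta> g"
  and hom_one: "\<theta> (\<lambda>x. 1) = mat 1"
  using hom unfolding cont_unital_hom_def by blast+

lemma hom_const: "\<theta> (\<lambda>x. c) = cmat_scale c (mat 1)"
  using hom_scale[of "\<lambda>x. 1" c] const_mem[of 1] by (simp add: hom_one)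

lemma mat_opnorm_bounded_on_unit_ball:
  obtains D where "\<And>f. f \<in> unit_ball A \<Longrightarrow> mat_opnorm (\<theta> f) \<le> D"
proof -
  obtain C where "\<And>f. f \<in> A \<Longrightarrow> mat_opnorm (\<theta> f) \<le> C * sup_norm f"
    using hom unfolding cont_unital_hom_def by blast
  then have "\<And>f. f \<in> unit_ball A \<Longrightarrow> mat_opnorm (\<theta> f) \<le> \<bar>C\<bar>"
    by (rule le_abs_on_unit_ball)
  then show thesis
    by (rule that)
qed

lemma compact_closure_image_unit_ball: "compact (closure (\<theta> ` unit_ball A))"
proof -
  obtain D where "\<And>f. f \<in> unit_ball A \<Longrightarrow> mat_opnorm (\<theta> f) \<le> D"
    using mat_opnorm_bounded_on_unit_ball by blast
  then have "\<And>f. f \<in> unit_ball A \<Longrightarrow> norm (\<theta> f) \<le> CARD('n) * (CARD('n) * D)"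
    by (meson norm_le_mat_opnorm mult_left_mono of_nat_0_le_iff order_trans)
  then have "bounded (\<theta> ` unit_ball A)"
    unfolding bounded_iff by blast
  then show ?thesis
    by (simp add: compact_closure)
qed

lemma disc_perturbation_mem_closure_image_unit_ball:
  assumes "Y \<in> closure (\<theta> ` unit_ball A)" and w: "cmod w \<le> 1/2"
  shows "cmat_scale (of_real (1 / (1 + 2 * (cmod w)^2)))
      (Y + cmat_scale (- w) (mat 1) + cmat_scale (cnj w) (Y ** Y)) \<in> closure (\<theta> ` unit_ball A)"
proof -
  define c where "c = complex_of_real (1 / (1 + 2 * (cmod w)^2))"
  define P :: "complex^'n^'n \<Rightarrow> complex^'n^'n"
    where "P = (\<lambda>Y. cmat_scale c (Y + cmat_scale (- w) (mat 1) + cmat_scale (cnj w) (Y ** Y)))"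
  have "P (\<theta> g) \<in> \<theta> ` unit_ball A" if g: "g \<in> unit_ball A" for g
  proof -
    define h where "h = (\<lambda>x. c * ((g x + - w) + cnj w * (g x * g x)))"
    have "g \<in> A"
      using g by (simp add: unit_ball_def)
    then have "h \<in> A" and "\<theta> h = P (\<theta> g)"
      unfolding h_def P_def by (simp_all only: const_mem add_mem mult_mem scale_mem hom_add hom_scale hom_mult hom_const)
    moreover have "sup_norm h \<le> 1"
    proof (rule sup_norm_le)
      fix x
      have "cmod (g x - w + cnj w * (g x)^2) \<le> 1 + 2 * (cmod w)^2"
        using norm_disc_perturbation_le[OF sup_norm_unit_ball(3)[OF g] w] .
      moreover have "cmod c = 1 / (1 + 2 * (cmod w)^2)"
        unfolding c_def norm_of_real by (simp add: abs_of_nonneg)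
      ultimately show "cmod (h x) \<le> 1"
        by (simp add: h_def norm_mult power2_eq_square divide_le_eq add_pos_nonneg)
    qed
    ultimately have "h \<in> unit_ball A"
      by (simp add: unit_ball_def)
    with \<open>\<theta> h = P (\<theta> g)\<close> show ?thesis
      by (metis image_eqI)
  qed
  then have "P ` closure (\<theta> ` unit_ball A) \<subseteq> closure (\<theta> ` unit_ball A)"
    using closure_subset by (intro image_closure_subset) (auto simp: P_def intro!: continuous_intros)
  then show ?thesis
    using assms(1) unfolding P_def c_def by blast
qed

lemma maximizing_pair:
  obtains X u where "X \<in> closure (\<theta> ` unit_ball A)" and "norm u = 1"
    and "\<And>Y z. Y \<in> closure (\<theta> ` unit_ball A) \<Longrightarrow> norm (Y *v z) \<le> norm (X *v u) * norm z"
proof -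
  have "closure (\<theta> ` unit_ball A) \<noteq> {}"
    using const_1_mem_unit_ball by auto
  with compact_closure_image_unit_ball show thesis
    by (rule compact_matrices_maximizing_vector) (rule that)
qed

lemma map_norm_le_of_bound:
  assumes bound: "\<And>Y z. Y \<in> closure (\<theta> ` unit_ball A) \<Longrightarrow> norm (Y *v z) \<le> m * norm z"
  shows "map_norm A \<theta> \<le> m"
proof (rule map_norm_le)
  show "unit_ball A \<noteq> {}"
    using const_1_mem_unit_ball by blast
  fix f
  assume "f \<in> unit_ball A"
  then have "\<theta> f \<in> closure (\<theta> ` unit_ball A)"
    by (rule closure_subset[THEN subsetD, OF imageI])
  then show "mat_opnorm (\<theta> f) \<le> m"
    by (intro mat_opnorm_le bound)
qed

lemma norm_disc_perturbation_mult_vec_le: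
  assumes bound: "\<And>Y z. Y \<in> closure (\<theta> ` unit_ball A) \<Longrightarrow> norm (Y *v z) \<le> m * norm z"
    and "X \<in> closure (\<theta> ` unit_ball A)" and "cmod w \<le> 1/2"
  shows "norm (X *v u - w *s u + cnj w *s (X *v (X *v u))) \<le> m * (1 + 2 * (cmod w)^2) * norm u"
proof -
  define R where "R = 1 + 2 * (cmod w)^2"
  have "R > 0"
    by (simp add: R_def add_pos_nonneg)
  have "cmat_scale (of_real (1 / R)) (X + cmat_scale (- w) (mat 1) + cmat_scale (cnj w) (X ** X))
      \<in> closure (\<theta> ` unit_ball A)"
    unfolding R_def using assms(2,3) by (rule disc_perturbation_mem_closure_image_unit_ball)
  from bound[OF this, of u]
  have "norm (of_real (1 / R) *s (X *v u - w *s u + cnj w *s (X *v (X *v u)))) \<le> m * norm u"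
    by (simp add: cmat_scale_mult_vec matrix_vector_mult_add_rdistrib matrix_vector_mul_assoc vector_smult_lneg)
  then have "norm (X *v u - w *s u + cnj w *s (X *v (X *v u))) / R \<le> m * norm u"
    unfolding norm_vector_smult norm_of_real using \<open>R > 0\<close> by simp
  then show ?thesis
    using \<open>R > 0\<close> by (simp add: divide_le_eq R_def mult_ac)
qed

lemma norm_le_map_norm_add_scalar:
  assumes X: "X \<in> closure (\<theta> ` unit_ball A)" and orth: "cinner (X *v u) u = 0"
    and "norm u = 1" and \<beta>: "\<And>f. f \<in> A \<Longrightarrow> cmod (\<beta> f) \<le> C * sup_norm f"
  shows "norm (X *v u) \<le> map_norm A (\<lambda>f. \<theta> f + cmat_scale (\<beta> f) (mat 1))"
proof -
  define \<Phi> where "\<Phi> = (\<lambda>f. \<theta> f + cmat_scale (\<beta> f) (mat 1))"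
  define M where "M = map_norm A \<Phi>"
  define y where "y = X *v u"
  obtain D where D: "\<And>f. f \<in> unit_ball A \<Longrightarrow> mat_opnorm (\<theta> f) \<le> D"
    using mat_opnorm_bounded_on_unit_ball by blast
  have \<Phi>_le: "mat_opnorm (\<Phi> f) \<le> M" if "f \<in> unit_ball A" for f
    unfolding M_def
  proof (rule mat_opnorm_le_map_norm[OF _ that])
    fix g
    assume "g \<in> unit_ball A"
    then have "mat_opnorm (\<theta> g) + cmod (\<beta> g) \<le> D + \<bar>C\<bar>"
      using D le_abs_on_unit_ball[OF \<beta>] by (intro add_mono)
    then show "mat_opnorm (\<Phi> g) \<le> D + \<bar>C\<bar>"
      unfolding \<Phi>_def using mat_opnorm_add_scalar_le order_trans by blast
  qed
  have "cmod (cinner (Y *v u) y) \<le> M * norm y" if "Y \<in> \<theta> ` unit_ball A" for Y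
  proof -
    from that obtain g where g: "g \<in> unit_ball A" and Y: "Y = \<theta> g"
      by blast
    have "cinner u y = 0"
      using orth cnj_cinner[of y u] by (simp add: y_def)
    then have "cinner (Y *v u) y = cinner (\<Phi> g *v u) y"
      by (simp add: \<Phi>_def Y matrix_vector_mult_add_rdistrib cmat_scale_mult_vec cinner_add_left cinner_scale_left)
    also have "cmod \<dots> \<le> norm (\<Phi> g *v u) * norm y"
      by (rule norm_cinner_le)
    also have "\<dots> \<le> M * norm y"
      using norm_mult_le_mat_opnorm[of "\<Phi> g" u] \<Phi>_le[OF g] \<open>norm u = 1\<close>
      by (intro mult_right_mono) simp_all
    finally show ?thesis .
  qed
  moreover have "continuous_on (closure (\<theta> ` unit_ball A)) (\<lambda>Y. cmod (cinner (Y *v u) y))"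
    by (intro continuous_intros)
  ultimately have "cmod (cinner (X *v u) y) \<le> M * norm y"
    using continuous_le_on_closure[OF _ X] by blast
  then have sq: "norm y * norm y \<le> M * norm y"
    by (simp add: y_def cinner_self norm_mult power2_eq_square)
  have "0 \<le> M"
    using mat_opnorm_nonneg \<Phi>_le[OF const_1_mem_unit_ball] by (rule order_trans)
  then have "norm y \<le> M"
    using sq by (cases "norm y = 0") (auto intro: mult_right_le_imp_le[of _ "norm y"])
  then show ?thesis
    unfolding M_def \<Phi>_def y_def .
qed

end

theorem theorem4p1:
  fixes A :: "('x::t2_space \<Rightarrow> complex) set"
    and \<theta> :: "('x \<Rightarrow> complex) \<Rightarrow> complex^'n::finite^'n"
    and \<beta> :: "('x \<Rightarrow> complex) \<Rightarrow> complex"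
  assumes "compact (UNIV :: 'x set)"
    and "uniform_algebra A"
    and "cont_unital_hom A \<theta>"
    and "map_norm A \<theta> > 1"
    and "cont_lin_functional A \<beta>"
  shows "map_norm A (\<lambda>f. \<theta> f + cmat_scale (\<beta> f) (mat 1)) \<ge> map_norm A \<theta>"
proof -
  interpret unital_representation A \<theta>
    using assms(1-3) by unfold_locales
  obtain X u where X: "X \<in> closure (\<theta> ` unit_ball A)" and "norm u = 1"
    and max: "\<And>Y z. Y \<in> closure (\<theta> ` unit_ball A) \<Longrightarrow> norm (Y *v z) \<le> norm (X *v u) * norm z"
    by (rule maximizing_pair) blast
  have "map_norm A \<theta> \<le> norm (X *v u)"
    using max by (rule map_norm_le_of_bound)
  have "cinner (X *v u) u = 0"
    using max[OF X] \<open>norm u = 1\<close> \<open>map_norm A \<theta> \<le> norm (X *v u)\<close> assms(4)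
      norm_disc_perturbation_mult_vec_le[OF max X, where u = u]
    by (intro maximizing_vector_orthogonal) auto
  moreover obtain C where "\<And>f. f \<in> A \<Longrightarrow> cmod (\<beta> f) \<le> C * sup_norm f"
    using assms(5) unfolding cont_lin_functional_def by blast
  ultimately have "norm (X *v u) \<le> map_norm A (\<lambda>f. \<theta> f + cmat_scale (\<beta> f) (mat 1))"
    using X \<open>norm u = 1\<close> by (intro norm_le_map_norm_add_scalar)
  with \<open>map_norm A \<theta> \<le> norm (X *v u)\<close> show ?thesis
    by linarith
qed

end
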